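(* Let $(X,\Pi)$ be a quasiconcave quasisubmodular aggregative game with aggregator $a$, and let $x^*$ be a fESS of it. If $x\in X$ is between some $x'\in X$ and $x^*$, then $\Pi(x,a(x,x'))\ge\Pi(x',a(x,x'))$.
   Context: An aggregative game $(X,\Pi)$ consists of: a totally ordered action set $X$ and a totally ordered set $Z$; an aggregator $a:X\times X\to Z$ that is symmetric ($a(x,y)=a(y,x)$) and monotone increasing (if $x''\ge x'$, $y''\ge y'$ and $(x'',y'')\neq(x',y')$ then $a(x'',y'')>a(x',y')$); and $\Pi:X\times Z\to\mathbb{R}$, the underlying symmetric two-player game having payoff $\pi(x,y)=\Pi(x,a(x,y))$. It is quasisubmodular if for all $z''>z'$ in $Z$ and $x''>x'$ in $X$: $\Pi(x'',z'')-\Pi(x',z'')\ge0\Rightarrow\Pi(x'',z')-\Pi(x',z')\ge0$ and $\Pi(x'',z'')-\Pi(x',z'')>0\Rightarrow\Pi(x'',z')-\Pi(x',z')>0$. It is quasiconcave if for all $x<x'<x''$ in $X$ and $z\in Z$, $\Pi(x',z)\ge\min\{\Pi(x,z),\Pi(x'',z)\}$. An action $x^*$ is a fESS if $\Pi(x^*,a(x^*,x))\ge\Pi(x,a(x^*,x))$ for all $x\in X$. $x$ is between $x'$ and $x^*$ if $x'\le x\le x^*$ or $x^*\le x\le x'$. *)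

theory Defs
  imports Main "HOL.Real"
begin

definition aggregator :: "('x::linorder \<Rightarrow> 'x \<Rightarrow> 'z::linorder) \<Rightarrow> bool" where
  "aggregator a \<longleftrightarrow>
     (\<forall>x y. a x y = a y x) \<and>
     (\<forall>x' x'' y' y''. x'' \<ge> x' \<and> y'' \<ge> y' \<and> (x'', y'') \<noteq> (x', y')
        \<longrightarrow> a x'' y'' > a x' y')"

definition quasisubmodular :: "('x::linorder \<Rightarrow> 'z::linorder \<Rightarrow> real) \<Rightarrow> bool" where
  "quasisubmodular Pi \<longleftrightarrow>
     (\<forall>z' z'' x' x''. z'' > z' \<and> x'' > x' \<longrightarrow>
        (Pi x'' z'' - Pi x' z'' \<ge> 0 \<longrightarrow> Pi x'' z' - Pi x' z' \<ge> 0) \<and>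
        (Pi x'' z'' - Pi x' z'' > 0 \<longrightarrow> Pi x'' z' - Pi x' z' > 0))"

definition quasiconcave_game :: "('x::linorder \<Rightarrow> 'z \<Rightarrow> real) \<Rightarrow> bool" where
  "quasiconcave_game Pi \<longleftrightarrow>
     (\<forall>x x' x'' z. x < x' \<and> x' < x'' \<longrightarrow> Pi x' z \<ge> min (Pi x z) (Pi x'' z))"

definition fESS :: "('x \<Rightarrow> 'x \<Rightarrow> 'z) \<Rightarrow> ('x \<Rightarrow> 'z \<Rightarrow> real) \<Rightarrow> 'x \<Rightarrow> bool" where
  "fESS a Pi xs \<longleftrightarrow> (\<forall>x. Pi xs (a xs x) \<ge> Pi x (a xs x))"

definition between :: "'x::linorder \<Rightarrow> 'x \<Rightarrow> 'x \<Rightarrow> bool" where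
  "between x x' xs \<longleftrightarrow> (x' \<le> x \<and> x \<le> xs) \<or> (xs \<le> x \<and> x \<le> x')"

end

theory Submission
  imports Defs
begin

text \<open>Against the opponent x', the fESS x* does at least as well as x' at the aggregate
  a x* x'. Quasiconcavity carries this advantage to every x between x' and x*, still at
  the aggregate a x* x'. Moving from a x* x' to a x x' changes the aggregate in the
  direction in which quasisubmodularity preserves the sign of the payoff difference
  between the larger and the smaller of x and x'.\<close>

lemma aggregator_strict_mono_left:
  assumes "aggregator a" and "u < v"
  shows "a u w < a v w"
proof -
  have "(v, w) \<noteq> (u, w)" using assms(2) by simp
  with assms show ?thesis unfolding aggregator_def using less_imp_le by blast
qed

lemma quasisubmodular_nonneg_decrease:
  assumes "quasisubmodular Pi" and "z' < z''" and "u' < u''"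
    and "Pi u'' z'' \<ge> Pi u' z''"
  shows "Pi u'' z' \<ge> Pi u' z'"
  using assms unfolding quasisubmodular_def by force

lemma quasisubmodular_nonpos_increase:
  assumes "quasisubmodular Pi" and "z' < z''" and "u' < u''"
    and "Pi u'' z' \<le> Pi u' z'"
  shows "Pi u'' z'' \<le> Pi u' z''"
proof (rule ccontr)
  assume "\<not> Pi u'' z'' \<le> Pi u' z''"
  then have "Pi u'' z'' - Pi u' z'' > 0" by simp
  then have "Pi u'' z' - Pi u' z' > 0"
    using assms(1-3) unfolding quasisubmodular_def by blast
  with assms(4) show False by simp
qed

lemma quasiconcave_game_between_ge:
  assumes "quasiconcave_game Pi" and "between x x' xs" and "Pi xs z \<ge> Pi x' z"
  shows "Pi x z \<ge> Pi x' z"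
proof (cases "x = x' \<or> x = xs")
  case True
  with assms(3) show ?thesis by auto
next
  case False
  with assms(2) have "(x' < x \<and> x < xs) \<or> (xs < x \<and> x < x')"
    unfolding between_def by auto
  then have "Pi x z \<ge> min (Pi x' z) (Pi xs z)"
    using assms(1) unfolding quasiconcave_game_def by (metis min.commute)
  with assms(3) show ?thesis by simp
qed

theorem lemma6:
  fixes a :: "'x::linorder \<Rightarrow> 'x \<Rightarrow> 'z::linorder"
    and Pi :: "'x \<Rightarrow> 'z \<Rightarrow> real"
    and xs x x' :: 'x
  assumes "aggregator a"
    and "quasisubmodular Pi"
    and "quasiconcave_game Pi"
    and "fESS a Pi xs"
    and "between x x' xs"
  shows "Pi x (a x x') \<ge> Pi x' (a x x')"
proof -
  have "Pi xs (a xs x') \<ge> Pi x' (a xs x')"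
    using assms(4) unfolding fESS_def by blast
  then have at_fESS: "Pi x (a xs x') \<ge> Pi x' (a xs x')"
    by (rule quasiconcave_game_between_ge[OF assms(3,5)])
  consider "x = x'" | "x = xs" | "x' < x" "x < xs" | "xs < x" "x < x'"
    using assms(5) unfolding between_def by force
  then show ?thesis
  proof cases
    case 3
    then have "a x x' < a xs x'"
      using aggregator_strict_mono_left[OF assms(1)] by blast
    with \<open>x' < x\<close> show ?thesis
      using quasisubmodular_nonneg_decrease[OF assms(2) _ _ at_fESS] by blast
  next
    case 4
    then have "a xs x' < a x x'"
      using aggregator_strict_mono_left[OF assms(1)] by blast
    with \<open>x < x'\<close> show ?thesis
      using quasisubmodular_nonpos_increase[OF assms(2) _ _ at_fESS] by blast
  qed (use at_fESS in auto)
qed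

end
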